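(* Let $\eta\in[0,1]$ and let $\hat n_1,\hat n_2,\hat n_3\in\mathbb{R}^3$ be arbitrary unit vectors. For $k\in\{1,2,3\}$ let $M_k=\{E^k_+,E^k_-\}$ be the qubit POVM with $E^k_{\pm}=\tfrac12 I\pm\tfrac{\eta}{2}\vec\sigma\cdot\hat n_k$, and suppose the three POVMs are pairwise jointly measurable. Then there is no state-independent violation of the LSW inequality: there do not exist pairwise joint measurements $G_{12},G_{23},G_{13}$ (of $\{M_1,M_2\}$, $\{M_2,M_3\}$, $\{M_1,M_3\}$ respectively) such that $$R_3^Q(\rho)\equiv\frac13\sum_{(ij)\in\{(12),(23),(13)\}}\mathrm{Tr}\big(\rho\,(G^{ij}_{+-}+G^{ij}_{-+})\big)>1-\frac{\eta}{3}$$ holds for every qubit density operator $\rho$.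
   Context: $\vec\sigma=(\sigma_x,\sigma_y,\sigma_z)$ is the vector of Pauli matrices and $I$ the $2\times 2$ identity. A pairwise joint measurement of $\{M_i,M_j\}$ is a qubit POVM $G_{ij}=\{G^{ij}_{X_iX_j}\}_{X_i,X_j\in\{+,-\}}$ (so $G^{ij}_{X_iX_j}\ge 0$ and $\sum G^{ij}_{X_iX_j}=I$) satisfying $\sum_{X_j}G^{ij}_{X_iX_j}=E^i_{X_i}$ and $\sum_{X_i}G^{ij}_{X_iX_j}=E^j_{X_j}$. The POVMs are pairwise jointly measurable if such $G_{ij}$ exist for all three pairs. The quantity $R_3^Q(\rho)$ is the average probability of anticorrelated outcomes when one of the three pairs is chosen uniformly at random and jointly measured on $\rho$. *)

theory Defs
  imports "HOL-Analysis.Analysis"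
begin

type_synonym qop = "complex^2^2"

definition smat :: "complex \<Rightarrow> qop \<Rightarrow> qop" where
  "smat c A = (\<chi> i j. c * A$i$j)"

definition qtrace :: "qop \<Rightarrow> complex" where
  "qtrace A = (\<Sum>i\<in>UNIV. A$i$i)"

definition psd :: "qop \<Rightarrow> bool" where
  "psd A \<longleftrightarrow> (\<forall>v::complex^2.
      let q = (\<Sum>i\<in>UNIV. \<Sum>j\<in>UNIV. cnj (v$i) * A$i$j * v$j) in Im q = 0 \<and> Re q \<ge> 0)"

definition density :: "qop \<Rightarrow> bool" where
  "density \<rho> \<longleftrightarrow> psd \<rho> \<and> qtrace \<rho> = 1"

definition sigma_x :: qop where
  "sigma_x = (\<chi> i j. if i = j then 0 else 1)"
definition sigma_y :: qop where
  "sigma_y = (\<chi> i j. if i = j then 0 else if i = 1 then - \<i> else \<i>)"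
definition sigma_z :: qop where
  "sigma_z = (\<chi> i j. if i \<noteq> j then 0 else if i = 1 then 1 else -1)"

definition pauli_dot :: "real^3 \<Rightarrow> qop" where
  "pauli_dot n = smat (complex_of_real (n$1)) sigma_x + smat (complex_of_real (n$2)) sigma_y
                 + smat (complex_of_real (n$3)) sigma_z"

text \<open>Unsharp qubit effects E_{\<pm>} = I/2 \<pm> (\<eta>/2) \<sigma>\<cdot>n; outcome True = +, False = -.\<close>
definition effect :: "real \<Rightarrow> real^3 \<Rightarrow> bool \<Rightarrow> qop" where
  "effect \<eta> n x = smat (1/2) (mat 1) + smat (complex_of_real ((if x then 1 else -1) * \<eta> / 2)) (pauli_dot n)"

definition joint_meas :: "(bool \<Rightarrow> qop) \<Rightarrow> (bool \<Rightarrow> qop) \<Rightarrow> (bool \<Rightarrow> bool \<Rightarrow> qop) \<Rightarrow> bool" where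
  "joint_meas E F G \<longleftrightarrow>
     (\<forall>x y. psd (G x y)) \<and>
     (\<Sum>x\<in>UNIV. \<Sum>y\<in>UNIV. G x y) = mat 1 \<and>
     (\<forall>x. (\<Sum>y\<in>UNIV. G x y) = E x) \<and>
     (\<forall>y. (\<Sum>x\<in>UNIV. G x y) = F y)"

definition anticorr :: "qop \<Rightarrow> (bool \<Rightarrow> bool \<Rightarrow> qop) \<Rightarrow> real" where
  "anticorr \<rho> G = Re (qtrace (\<rho> ** (G True False + G False True)))"

definition R3Q :: "qop \<Rightarrow> (bool \<Rightarrow> bool \<Rightarrow> qop) \<Rightarrow> (bool \<Rightarrow> bool \<Rightarrow> qop) \<Rightarrow> (bool \<Rightarrow> bool \<Rightarrow> qop) \<Rightarrow> real" where
  "R3Q \<rho> G12 G23 G13 = (anticorr \<rho> G12 + anticorr \<rho> G23 + anticorr \<rho> G13) / 3"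

end

theory Submission imports Defs begin

text \<open>
  Evaluate at the pure state whose Bloch vector is \<open>n\<^sub>2\<close>.  For a joint measurement \<open>G\<close> of
  \<open>E\<close> and \<open>F\<close> and either outcome \<open>x\<close>, the marginal conditions give
  \<open>G\<^sub>+\<^sub>- + G\<^sub>-\<^sub>+ = E\<^sub>x + F\<^sub>x - 2 G\<^sub>x\<^sub>x\<close>, so by positivity of \<open>G\<^sub>x\<^sub>x\<close> the anticorrelation
  probability is at most \<open>Tr \<rho> E\<^sub>x + Tr \<rho> F\<^sub>x\<close>.  Choosing \<open>x = -\<close> for the pairs (12), (23)
  and \<open>x = +\<close> for (13), the contributions of \<open>n\<^sub>1\<close> and \<open>n\<^sub>3\<close> cancel, while \<open>E\<^sup>2\<^sub>-\<close> has
  probability \<open>(1 - \<eta>)/2\<close> on this state; hence \<open>3 R\<^sub>3\<^sup>Q(\<rho>) \<le> 3 - \<eta>\<close>.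
\<close>

definition ketbra :: "complex^2 \<Rightarrow> qop" where
  "ketbra v = (\<chi> i j. v$i * cnj (v$j))"

definition bloch_state :: "real^3 \<Rightarrow> qop" where
  "bloch_state n = smat (1/2) (mat 1 + pauli_dot n)"

lemma qtrace_mult_diff: "qtrace (R ** (A - B)) = qtrace (R ** A) - qtrace (R ** B)"
  by (simp add: qtrace_def matrix_matrix_mult_def sum_subtractf right_diff_distrib)

lemma qtrace_mult_add: "qtrace (R ** (A + B)) = qtrace (R ** A) + qtrace (R ** B)"
  by (simp add: qtrace_def matrix_add_ldistrib sum.distrib)

lemma qtrace_ketbra_mult:
  "qtrace (ketbra v ** A) = (\<Sum>i\<in>UNIV. \<Sum>j\<in>UNIV. cnj (v$i) * A$i$j * v$j)"
  by (simp add: qtrace_def ketbra_def matrix_matrix_mult_def sum_2 algebra_simps)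

lemma qtrace_ketbra_mult_nonneg:
  assumes "psd A"
  shows "Re (qtrace (ketbra v ** A)) \<ge> 0"
  using assms unfolding psd_def qtrace_ketbra_mult Let_def by blast

lemma psd_ketbra: "psd (ketbra v)"
  unfolding psd_def Let_def
proof
  fix w :: "complex^2"
  define s where "s = cnj (w$1) * v$1 + cnj (w$2) * v$2"
  have "(\<Sum>i\<in>UNIV. \<Sum>j\<in>UNIV. cnj (w$i) * ketbra v$i$j * w$j) = s * cnj s"
    unfolding ketbra_def s_def by (simp add: sum_2 algebra_simps)
  also have "\<dots> = complex_of_real ((Re s)\<^sup>2 + (Im s)\<^sup>2)"
    by (rule complex_mult_cnj)
  finally show "Im (\<Sum>i\<in>UNIV. \<Sum>j\<in>UNIV. cnj (w$i) * ketbra v$i$j * w$j) = 0 \<and>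
      0 \<le> Re (\<Sum>i\<in>UNIV. \<Sum>j\<in>UNIV. cnj (w$i) * ketbra v$i$j * w$j)"
    by simp
qed

lemma qtrace_bloch_state: "qtrace (bloch_state n) = 1"
  by (simp add: qtrace_def bloch_state_def smat_def pauli_dot_def sigma_x_def sigma_y_def
      sigma_z_def mat_def sum_2 field_simps)

lemma bloch_state_entries:
  "bloch_state n $ 1 $ 1 = (1 + n$3) / 2" "bloch_state n $ 1 $ 2 = (n$1 - \<i> * n$2) / 2"
  "bloch_state n $ 2 $ 1 = (n$1 + \<i> * n$2) / 2" "bloch_state n $ 2 $ 2 = (1 - n$3) / 2"
  by (simp_all add: bloch_state_def smat_def pauli_dot_def sigma_x_def sigma_y_def
      sigma_z_def mat_def field_simps)

lemma ketbra_entries_off_south_pole: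
  fixes a b c :: real
  assumes ab: "a * a + b * b = (1 - c) * (1 + c)" and pos: "1 + c > 0"
  obtains v where "ketbra v $ 1 $ 1 = (1 + c) / 2" "ketbra v $ 1 $ 2 = (a - \<i> * b) / 2"
    "ketbra v $ 2 $ 1 = (a + \<i> * b) / 2" "ketbra v $ 2 $ 2 = (1 - c) / 2"
proof
  define r where "r = sqrt (2 * (1 + c))"
  have r: "r > 0" "r * r = 2 * (1 + c)"
    using pos unfolding r_def by simp_all
  define v :: "complex^2"
    where "v = (\<chi> i. if i = 1 then complex_of_real ((1 + c) / r) else Complex (a / r) (b / r))"
  have sq: "((1 + c) / r) * ((1 + c) / r) = (1 + c) / 2"
    using r pos by (simp add: field_simps)
  have "ketbra v $ 1 $ 1 = complex_of_real (((1 + c) / r) * ((1 + c) / r))"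
    by (simp add: ketbra_def v_def)
  then show "ketbra v $ 1 $ 1 = (1 + c) / 2"
    unfolding sq by simp
  have "(a / r) * (a / r) + (b / r) * (b / r) = (a * a + b * b) / (r * r)"
    by (simp add: add_divide_distrib)
  also have "\<dots> = (1 - c) / 2"
    using ab r pos by (simp add: field_simps)
  finally show "ketbra v $ 2 $ 2 = (1 - c) / 2"
    by (simp add: ketbra_def v_def complex_eq_iff power2_eq_square)
  show "ketbra v $ 1 $ 2 = (a - \<i> * b) / 2" "ketbra v $ 2 $ 1 = (a + \<i> * b) / 2"
    using r pos by (simp_all add: ketbra_def v_def complex_eq_iff field_simps)
qed

lemma bloch_state_eq_ketbra:
  fixes n :: "real^3"
  assumes "norm n = 1"
  obtains v where "bloch_state n = ketbra v"
proof -
  define a b c where "a = n$1" and "b = n$2" and "c = n$3"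
  have unit: "a\<^sup>2 + b\<^sup>2 + c\<^sup>2 = 1"
    using assms unfolding a_def b_def c_def norm_eq_1
    by (simp add: inner_vec_def sum_3 power2_eq_square)
  have matrix_eqI: "bloch_state n = ketbra v"
    if "ketbra v $ 1 $ 1 = (1 + c) / 2" "ketbra v $ 1 $ 2 = (a - \<i> * b) / 2"
       "ketbra v $ 2 $ 1 = (a + \<i> * b) / 2" "ketbra v $ 2 $ 2 = (1 - c) / 2" for v
    by (simp add: vec_eq_iff forall_2 that bloch_state_entries a_def b_def c_def)
  show thesis
  proof (cases "c = -1")
    case True
    with unit have "a = 0" "b = 0"
      by (simp_all add: sum_power2_eq_zero_iff)
    with True show thesis
      by (intro that[of "\<chi> i. if i = 1 then 0 else 1"] matrix_eqI) (simp_all add: ketbra_def)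
  next
    case False
    have "c\<^sup>2 \<le> 1"
      using unit by (smt (verit) zero_le_power2)
    then have "-1 \<le> c"
      by (simp add: abs_square_le_1)
    with False have "1 + c > 0"
      by simp
    moreover have "a * a + b * b = (1 - c) * (1 + c)"
      using unit by (simp add: power2_eq_square algebra_simps)
    ultimately show thesis
      by (metis ketbra_entries_off_south_pole matrix_eqI that)
  qed
qed

lemma density_bloch_state: "norm n = 1 \<Longrightarrow> density (bloch_state n)"
  by (metis bloch_state_eq_ketbra density_def psd_ketbra qtrace_bloch_state)

lemma qtrace_bloch_state_effect:
  "Re (qtrace (bloch_state n ** effect \<eta> m x)) = 1/2 + (if x then 1 else -1) * \<eta> / 2 * (m \<bullet> n)"
  by (cases x; simp add: qtrace_def matrix_matrix_mult_def sum_2 bloch_state_def effect_def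
      smat_def pauli_dot_def sigma_x_def sigma_y_def sigma_z_def mat_def inner_vec_def sum_3
      field_simps)

lemma joint_meas_anticorrelated_eq:
  assumes "joint_meas E F G"
  shows "G True False + G False True = E x + F x - G x x - G x x"
proof -
  have marginals: "G x False + G x True = E x" "G False x + G True x = F x"
    using assms unfolding joint_meas_def by (auto simp: UNIV_bool)
  show ?thesis
    unfolding marginals[symmetric] by (cases x) (simp_all add: algebra_simps)
qed

lemma anticorr_ketbra_le:
  assumes "joint_meas E F G"
  shows "anticorr (ketbra v) G \<le> Re (qtrace (ketbra v ** E x)) + Re (qtrace (ketbra v ** F x))"
proof -
  have "psd (G x x)"
    using assms unfolding joint_meas_def by blast
  then have "Re (qtrace (ketbra v ** G x x)) \<ge> 0"
    by (rule qtrace_ketbra_mult_nonneg)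
  then show ?thesis
    unfolding anticorr_def joint_meas_anticorrelated_eq[OF assms, of x]
      qtrace_mult_diff qtrace_mult_add
    by simp
qed

theorem mainTheorem1:
  fixes \<eta> :: real and n1 n2 n3 :: "real^3"
  assumes "0 \<le> \<eta>" and "\<eta> \<le> 1"
    and "norm n1 = 1" and "norm n2 = 1" and "norm n3 = 1"
    and "\<exists>G12 G23 G13. joint_meas (effect \<eta> n1) (effect \<eta> n2) G12
                      \<and> joint_meas (effect \<eta> n2) (effect \<eta> n3) G23
                      \<and> joint_meas (effect \<eta> n1) (effect \<eta> n3) G13"
  shows "\<not> (\<exists>G12 G23 G13. joint_meas (effect \<eta> n1) (effect \<eta> n2) G12
                      \<and> joint_meas (effect \<eta> n2) (effect \<eta> n3) G23
                      \<and> joint_meas (effect \<eta> n1) (effect \<eta> n3) G13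
                      \<and> (\<forall>\<rho>. density \<rho> \<longrightarrow> R3Q \<rho> G12 G23 G13 > 1 - \<eta> / 3))"
proof
  assume "\<exists>G12 G23 G13. joint_meas (effect \<eta> n1) (effect \<eta> n2) G12
                      \<and> joint_meas (effect \<eta> n2) (effect \<eta> n3) G23
                      \<and> joint_meas (effect \<eta> n1) (effect \<eta> n3) G13
                      \<and> (\<forall>\<rho>. density \<rho> \<longrightarrow> R3Q \<rho> G12 G23 G13 > 1 - \<eta> / 3)"
  then obtain G12 G23 G13 where G12: "joint_meas (effect \<eta> n1) (effect \<eta> n2) G12"
    and G23: "joint_meas (effect \<eta> n2) (effect \<eta> n3) G23"
    and G13: "joint_meas (effect \<eta> n1) (effect \<eta> n3) G13"
    and violation: "\<forall>\<rho>. density \<rho> \<longrightarrow> R3Q \<rho> G12 G23 G13 > 1 - \<eta> / 3"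
    by blast
  obtain v where v: "bloch_state n2 = ketbra v"
    using bloch_state_eq_ketbra[OF \<open>norm n2 = 1\<close>] .
  have "R3Q (ketbra v) G12 G23 G13 > 1 - \<eta> / 3"
    using violation density_bloch_state[OF \<open>norm n2 = 1\<close>] v by simp
  moreover have "n2 \<bullet> n2 = 1"
    using \<open>norm n2 = 1\<close> by (simp add: norm_eq_1)
  ultimately show False
    using anticorr_ketbra_le[OF G12, of v False] anticorr_ketbra_le[OF G23, of v False]
      anticorr_ketbra_le[OF G13, of v True]
    unfolding R3Q_def v[symmetric] qtrace_bloch_state_effect
    by (simp add: inner_commute algebra_simps)
qed

end
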